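(* For any two delay functions $\mathbf{d},\mathbf{d}':S_{fd}\to\mathbb{R}_{>0}$ we have $E_{C(\mathbf{d})}=\infty$ if and only if $E_{C(\mathbf{d}')}=\infty$.
   Context: $C=(S,\lambda,\mathrm{P},S_{fd},\mathrm{F},s_{in})$ is a fdCTMC structure: $S$ finite, $\lambda>0$, $\mathrm{P}\in\mathbb{R}_{\ge0}^{S\times S}$ and $\mathrm{F}\in\mathbb{R}_{\ge0}^{S_{fd}\times S}$ stochastic, $S_{fd}\subseteq S$, $s_{in}\in S$. For a delay function $\mathbf{d}$, $C(\mathbf{d})$ has runs $(s_0,d_0)t_0(s_1,d_1)t_1\cdots$, $s_0=s_{in}$, $d_0=\mathbf{d}(s_0)$ if $s_0\in S_{fd}$ else $\infty$; from $(s_i,d_i)$ an $\mathrm{Exp}(\lambda)$ time is sampled; if it is $t_i<d_i$, $s_{i+1}\sim\mathrm{P}(s_i,\cdot)$ with $d_{i+1}=d_i-t_i$ if $s_i,s_{i+1}\in S_{fd}$, $\mathbf{d}(s_{i+1})$ if $s_{i+1}\in S_{fd},s_i\notin S_{fd}$, $\infty$ if $s_{i+1}\notin S_{fd}$; otherwise $t_i=d_i$, $s_{i+1}\sim\mathrm{F}(s_i,\cdot)$, $d_{i+1}=\mathbf{d}(s_{i+1})$ if $s_{i+1}\in S_{fd}$, else $\infty$. A cost structure $(G,\mathcal{R},\mathcal{I}_{\mathrm{P}},\mathcal{I}_{\mathrm{F}})$ is fixed: goal states $G$, rates $\mathcal{R}:S\to\mathbb{R}_{\ge0}$, impulse costs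 $\mathcal{I}_{\mathrm{P}},\mathcal{I}_{\mathrm{F}}:S\times S\to\mathbb{R}_{\ge0}$. The total cost of a run is $\sum_{i<n}(t_i\mathcal{R}(s_i)+I_i)$ for the least $n>0$ with $s_n\in G$, with $I_i=\mathcal{I}_{\mathrm{P}}(s_i,s_{i+1})$ if $t_i<d_i$ and $\mathcal{I}_{\mathrm{F}}(s_i,s_{i+1})$ if $t_i=d_i$, and $\infty$ if no such $n$; $E_{C(\mathbf{d})}$ is its expectation. *)

theory Defs
  imports "HOL-Probability.Probability"
begin

(* fdCTMC structure C = (S, lam, P, Sfd, F, s_in); S is the (finite) universe of the type 's.
   P s t = P(s,t); F s t = F(s,t) (only meaningful for s in Sfd). *)
definition fdCTMC :: "real \<Rightarrow> ('s::finite \<Rightarrow> 's \<Rightarrow> real) \<Rightarrow> 's set \<Rightarrow> ('s \<Rightarrow> 's \<Rightarrow> real) \<Rightarrow> bool" where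
  "fdCTMC lam P Sfd F \<longleftrightarrow> lam > 0
     \<and> (\<forall>s t. P s t \<ge> 0) \<and> (\<forall>s. (\<Sum>t\<in>UNIV. P s t) = 1)
     \<and> (\<forall>s\<in>Sfd. (\<forall>t. F s t \<ge> 0) \<and> (\<Sum>t\<in>UNIV. F s t) = 1)"

definition cost_structure :: "('s \<Rightarrow> real) \<Rightarrow> ('s \<Rightarrow> 's \<Rightarrow> real) \<Rightarrow> ('s \<Rightarrow> 's \<Rightarrow> real) \<Rightarrow> bool" where
  "cost_structure R IP IF \<longleftrightarrow> (\<forall>s. R s \<ge> 0) \<and> (\<forall>s t. IP s t \<ge> 0) \<and> (\<forall>s t. IF s t \<ge> 0)"

(* Randomness consumed by one step: an Exp(lam) time t, and independent successor choices
   ps s ~ P(s,.) and fs s ~ F(s,.) for every state s. *)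
definition step_measure :: "real \<Rightarrow> ('s::finite \<Rightarrow> 's \<Rightarrow> real) \<Rightarrow> 's set \<Rightarrow> ('s \<Rightarrow> 's \<Rightarrow> real)
    \<Rightarrow> (real \<times> ('s \<Rightarrow> 's) \<times> ('s \<Rightarrow> 's)) measure" where
  "step_measure lam P Sfd F =
     density lborel (exponential_density lam) \<Otimes>\<^sub>M
     measure_pmf (pair_pmf (Pi_pmf UNIV undefined (\<lambda>s. embed_pmf (P s)))
                           (Pi_pmf UNIV undefined (\<lambda>s. if s \<in> Sfd then embed_pmf (F s) else return_pmf s)))"

definition run_space :: "real \<Rightarrow> ('s::finite \<Rightarrow> 's \<Rightarrow> real) \<Rightarrow> 's set \<Rightarrow> ('s \<Rightarrow> 's \<Rightarrow> real)
    \<Rightarrow> (nat \<Rightarrow> real \<times> ('s \<Rightarrow> 's) \<times> ('s \<Rightarrow> 's)) measure" where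
  "run_space lam P Sfd F = PiM UNIV (\<lambda>_. step_measure lam P Sfd F)"

definition init_delay :: "'s set \<Rightarrow> ('s \<Rightarrow> real) \<Rightarrow> 's \<Rightarrow> ereal" where
  "init_delay Sfd d s = (if s \<in> Sfd then ereal (d s) else \<infinity>)"

definition trans :: "'s set \<Rightarrow> ('s \<Rightarrow> real) \<Rightarrow> 's \<times> ereal \<Rightarrow> real \<times> ('s \<Rightarrow> 's) \<times> ('s \<Rightarrow> 's) \<Rightarrow> 's \<times> ereal" where
  "trans Sfd d c x = (case c of (s, dl) \<Rightarrow> case x of (t, ps, fs) \<Rightarrow>
     if ereal t < dl then
       (ps s, if ps s \<in> Sfd then (if s \<in> Sfd then dl - ereal t else ereal (d (ps s))) else \<infinity>)
     else (fs s, init_delay Sfd d (fs s)))"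

definition step_cost :: "('s \<Rightarrow> real) \<Rightarrow> ('s \<Rightarrow> 's \<Rightarrow> real) \<Rightarrow> ('s \<Rightarrow> 's \<Rightarrow> real)
    \<Rightarrow> 's \<times> ereal \<Rightarrow> real \<times> ('s \<Rightarrow> 's) \<times> ('s \<Rightarrow> 's) \<Rightarrow> ennreal" where
  "step_cost R IP IF c x = (case c of (s, dl) \<Rightarrow> case x of (t, ps, fs) \<Rightarrow>
     if ereal t < dl then ennreal (t * R s + IP s (ps s))
     else ennreal (real_of_ereal dl * R s + IF s (fs s)))"

primrec cfg :: "'s set \<Rightarrow> ('s \<Rightarrow> real) \<Rightarrow> 's \<Rightarrow> (nat \<Rightarrow> real \<times> ('s \<Rightarrow> 's) \<times> ('s \<Rightarrow> 's)) \<Rightarrow> nat \<Rightarrow> 's \<times> ereal" where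
  "cfg Sfd d s_in \<omega> 0 = (s_in, init_delay Sfd d s_in)"
| "cfg Sfd d s_in \<omega> (Suc i) = trans Sfd d (cfg Sfd d s_in \<omega> i) (\<omega> i)"

definition total_cost :: "'s set \<Rightarrow> 's \<Rightarrow> 's set \<Rightarrow> ('s \<Rightarrow> real) \<Rightarrow> ('s \<Rightarrow> 's \<Rightarrow> real) \<Rightarrow> ('s \<Rightarrow> 's \<Rightarrow> real)
    \<Rightarrow> ('s \<Rightarrow> real) \<Rightarrow> (nat \<Rightarrow> real \<times> ('s \<Rightarrow> 's) \<times> ('s \<Rightarrow> 's)) \<Rightarrow> ennreal" where
  "total_cost Sfd s_in G R IP IF d \<omega> =
     (if \<exists>n>0. fst (cfg Sfd d s_in \<omega> n) \<in> G
      then (\<Sum>i < (LEAST n. n > 0 \<and> fst (cfg Sfd d s_in \<omega> n) \<in> G).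
              step_cost R IP IF (cfg Sfd d s_in \<omega> i) (\<omega> i))
      else \<infinity>)"

definition expected_cost :: "real \<Rightarrow> ('s::finite \<Rightarrow> 's \<Rightarrow> real) \<Rightarrow> 's set \<Rightarrow> ('s \<Rightarrow> 's \<Rightarrow> real) \<Rightarrow> 's
    \<Rightarrow> 's set \<Rightarrow> ('s \<Rightarrow> real) \<Rightarrow> ('s \<Rightarrow> 's \<Rightarrow> real) \<Rightarrow> ('s \<Rightarrow> 's \<Rightarrow> real) \<Rightarrow> ('s \<Rightarrow> real) \<Rightarrow> ennreal" where
  "expected_cost lam P Sfd F s_in G R IP IF d =
     (\<integral>\<^sup>+ \<omega>. total_cost Sfd s_in G R IP IF d \<omega> \<partial>run_space lam P Sfd F)"

end

theory Submission
  imports Defs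
begin

text \<open>
  Call a state a dead end if no goal state is reachable from it in the graph of positive-probability
  P- and F-transitions. Then E_{C(d)} = \<infinity> holds exactly when a dead end can be reached from
  s_in through non-goal states; this graph condition does not mention d.

  Since all delays are positive and finite, every edge of the graph is taken with positive
  probability from every admissible configuration. Hence if a dead end is reachable, the run avoids G
  forever with positive probability and the expected cost is infinite. Otherwise, from every
  configuration of a state reachable through non-goal states, G is hit within K steps with
  probability less than 1. This bound is not uniform in the remaining delay, but with probability at
  least P(Exp(\<lambda>) > max d) the next step fires a fixed-delay transition and lands in one of finitely
  many fresh configurations. So the probability of avoiding G for m(K+1) steps decays geometrically
  in m, and as the cost of a single step has bounded expectation, the expected total cost is finite.
\<close>

lemma nn_integral_pos_if_pos_on:
  assumes "h \<in> borel_measurable N" and "{x\<in>space N. Q x} \<in> sets N"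
    and "emeasure N {x\<in>space N. Q x} > 0" and "AE x in N. Q x \<longrightarrow> h x > 0"
  shows "(\<integral>\<^sup>+x. h x \<partial>N) > 0"
proof (rule ccontr)
  assume "\<not> ?thesis"
  then have "AE x in N. h x = 0"
    using assms(1) by (simp add: not_less nn_integral_0_iff_AE)
  with assms(4) have "AE x in N. \<not> Q x" by eventually_elim auto
  then have "emeasure N {x\<in>space N. Q x} = 0"
    using AE_iff_measurable[OF _ refl, of N "\<lambda>x. \<not> Q x"] assms(2) by simp
  with assms(3) show False by simp
qed

lemma ennreal_one_minus_less_one: "0 < (a::ennreal) \<Longrightarrow> a \<le> 1 \<Longrightarrow> 1 - a < 1"
  by (subst minus_less_iff_ennreal) (auto simp: top_unique intro: le_less_trans[of a 1 top])

lemma (in prob_space) nn_integral_eq_one_minus: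
  assumes [measurable]: "h \<in> borel_measurable M" and le: "AE x in M. h x \<le> 1"
  shows "(\<integral>\<^sup>+x. h x \<partial>M) = 1 - (\<integral>\<^sup>+x. 1 - h x \<partial>M)"
proof -
  have "(\<integral>\<^sup>+x. h x \<partial>M) + (\<integral>\<^sup>+x. 1 - h x \<partial>M) = (\<integral>\<^sup>+x. h x + (1 - h x) \<partial>M)"
    by (rule nn_integral_add[symmetric]) auto
  also have "\<dots> = (\<integral>\<^sup>+x. 1 \<partial>M)"
    using le by (intro nn_integral_cong_AE) (auto simp: add_diff_self_ennreal)
  finally have sum: "(\<integral>\<^sup>+x. h x \<partial>M) + (\<integral>\<^sup>+x. 1 - h x \<partial>M) = 1"
    using emeasure_space_1 by simp
  then have "(\<integral>\<^sup>+x. 1 - h x \<partial>M) \<noteq> top"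
    by (metis ennreal_add_eq_top ennreal_one_neq_top)
  with sum show ?thesis by (metis ennreal_add_diff_cancel_right)
qed

lemma (in prob_space) nn_integral_less_one_if_gap:
  assumes [measurable]: "h \<in> borel_measurable M" "Measurable.pred M Q"
    and "AE x in M. h x \<le> 1" and "emeasure M {x\<in>space M. Q x} > 0"
    and "AE x in M. Q x \<longrightarrow> h x < 1"
  shows "(\<integral>\<^sup>+x. h x \<partial>M) < 1"
proof -
  have "(\<integral>\<^sup>+x. 1 - h x \<partial>M) > 0"
    by (rule nn_integral_pos_if_pos_on[where Q = Q])
       (use assms(4,5) in \<open>auto simp: diff_gr0_ennreal elim!: AE_mp\<close>)
  moreover have "(\<integral>\<^sup>+x. 1 - h x \<partial>M) \<le> (\<integral>\<^sup>+x. 1 \<partial>M)"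
    by (intro nn_integral_mono) auto
  ultimately show ?thesis
    using nn_integral_eq_one_minus[OF assms(1,3)] emeasure_space_1
    by (simp add: ennreal_one_minus_less_one)
qed

lemma (in prob_space) nn_integral_le_one_minus_gap:
  assumes [measurable]: "h \<in> borel_measurable M" "Measurable.pred M E"
    and le: "AE x in M. h x \<le> 1" and hr: "AE x in M. E x \<longrightarrow> h x \<le> r"
  shows "(\<integral>\<^sup>+x. h x \<partial>M) \<le> 1 - (1 - r) * emeasure M {x\<in>space M. E x}"
proof -
  have "(1 - r) * emeasure M {x\<in>space M. E x} = (\<integral>\<^sup>+x. (1 - r) * indicator {x\<in>space M. E x} x \<partial>M)"
    by (rule nn_integral_cmult_indicator[symmetric]) measurable
  also have "\<dots> \<le> (\<integral>\<^sup>+x. 1 - h x \<partial>M)"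
    using hr by (intro nn_integral_mono_AE)
      (auto elim!: AE_mp intro: ennreal_minus_mono split: split_indicator)
  finally show ?thesis
    using nn_integral_eq_one_minus[OF assms(1) le] by (auto intro: ennreal_minus_mono)
qed

lemma suminf_less_top_if_geometric_blocks:
  fixes f :: "nat \<Rightarrow> ennreal"
  assumes L: "L > 0" and b: "0 \<le> b" "b < 1" and f: "\<And>i. f i \<le> ennreal (b ^ (i div L))"
  shows "suminf f < top"
proof -
  have geometric: "(\<Sum>m<n. b ^ m) \<le> 1 / (1 - b)" for n
  proof -
    have "(\<Sum>m<n. b ^ m) \<le> (\<Sum>m. b ^ m)"
      using b by (intro sum_le_suminf summable_geometric) auto
    also have "\<dots> = 1 / (1 - b)" using b by (intro suminf_geometric) auto
    finally show ?thesis .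
  qed
  have partial: "(\<Sum>i<n. f i) \<le> ennreal (real L / (1 - b))" for n
  proof -
    have "(\<Sum>i<n. f i) \<le> (\<Sum>i<n * L. f i)"
      using L by (intro sum_mono2) auto
    also have "\<dots> = (\<Sum>m<n. \<Sum>i\<in>{m * L..<m * L + L}. f i)"
      by (rule sum.nat_group[symmetric])
    also have "\<dots> \<le> (\<Sum>m<n. \<Sum>i\<in>{m * L..<m * L + L}. ennreal (b ^ m))"
    proof (intro sum_mono)
      fix m i assume "i \<in> {m * L..<m * L + L}"
      then have "i div L = m" using L by (auto intro: div_nat_eqI simp: mult.commute)
      then show "f i \<le> ennreal (b ^ m)" using f[of i] by simp
    qed
    also have "\<dots> = ennreal (real L * (\<Sum>m<n. b ^ m))"
      using b by (simp add: sum_distrib_left ennreal_of_nat_eq_real_of_nat ennreal_mult''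
          sum_ennreal[symmetric])
    also have "\<dots> \<le> ennreal (real L / (1 - b))"
      using mult_left_mono[OF geometric, of "real L" n] by (intro ennreal_leI) simp
    finally show ?thesis .
  qed
  have "suminf f = (SUP n. \<Sum>i<n. f i)" by (rule suminf_eq_SUP)
  also have "\<dots> \<le> ennreal (real L / (1 - b))" by (intro SUP_least partial)
  finally show ?thesis by (simp add: le_less_trans)
qed

definition edge :: "('s \<Rightarrow> 's \<Rightarrow> real) \<Rightarrow> ('s \<Rightarrow> 's \<Rightarrow> real) \<Rightarrow> 's set \<Rightarrow> 's \<Rightarrow> 's \<Rightarrow> bool" where
  "edge P F Sfd s t \<longleftrightarrow> P s t \<noteq> 0 \<or> (s \<in> Sfd \<and> F s t \<noteq> 0)"

definition goal_reachable :: "('s \<Rightarrow> 's \<Rightarrow> real) \<Rightarrow> ('s \<Rightarrow> 's \<Rightarrow> real) \<Rightarrow> 's set \<Rightarrow> 's set \<Rightarrow> 's \<Rightarrow> bool" where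
  "goal_reachable P F Sfd G s \<longleftrightarrow> (\<exists>g\<in>G. (edge P F Sfd)\<^sup>+\<^sup>+ s g)"

definition reachable_avoiding :: "('s \<Rightarrow> 's \<Rightarrow> real) \<Rightarrow> ('s \<Rightarrow> 's \<Rightarrow> real) \<Rightarrow> 's set \<Rightarrow> 's set
    \<Rightarrow> 's \<Rightarrow> 's \<Rightarrow> bool" where
  "reachable_avoiding P F Sfd G = (\<lambda>s t. edge P F Sfd s t \<and> t \<notin> G)\<^sup>*\<^sup>*"

definition dead_end_reachable :: "('s \<Rightarrow> 's \<Rightarrow> real) \<Rightarrow> ('s \<Rightarrow> 's \<Rightarrow> real) \<Rightarrow> 's set \<Rightarrow> 's set \<Rightarrow> 's \<Rightarrow> bool" where
  "dead_end_reachable P F Sfd G s \<longleftrightarrow> (\<exists>u. reachable_avoiding P F Sfd G s u \<and> \<not> goal_reachable P F Sfd G u)"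

lemma goal_reachable_step:
  "edge P F Sfd s t \<Longrightarrow> t \<in> G \<or> goal_reachable P F Sfd G t \<Longrightarrow> goal_reachable P F Sfd G s"
  unfolding goal_reachable_def by (auto intro: tranclp_into_tranclp2)

lemma reachable_avoiding_step:
  "reachable_avoiding P F Sfd G s u \<Longrightarrow> edge P F Sfd u t \<Longrightarrow> t \<notin> G \<Longrightarrow> reachable_avoiding P F Sfd G s t"
  unfolding reachable_avoiding_def by (auto intro: rtranclp.rtrancl_into_rtrancl)

abbreviation config_space :: "('s \<times> ereal) measure" where
  "config_space \<equiv> count_space UNIV \<Otimes>\<^sub>M borel"

lemma trans_measurable:
  fixes Sfd :: "'s::finite set"
  shows "(\<lambda>(c, x). trans Sfd d c x)
    \<in> measurable (config_space \<Otimes>\<^sub>M (borel \<Otimes>\<^sub>M count_space UNIV)) config_space"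
proof -
  let ?N = "config_space \<Otimes>\<^sub>M (borel \<Otimes>\<^sub>M count_space UNIV)"
  \<comment> \<open>The successor functions are applied to the random current state; as there are only
    countably many states and successor choices, both can be fixed first.\<close>
  define tr where "tr k s y = (if ereal (fst (snd y)) < snd (fst y) then
       (fst k s, if fst k s \<in> Sfd then (if s \<in> Sfd then snd (fst y) - ereal (fst (snd y))
         else ereal (d (fst k s))) else \<infinity>)
     else (snd k s, init_delay Sfd d (snd k s)))"
    for k :: "('s \<Rightarrow> 's) \<times> ('s \<Rightarrow> 's)" and s and y :: "('s \<times> ereal) \<times> real \<times> ('s \<Rightarrow> 's) \<times> ('s \<Rightarrow> 's)"
  have state: "(\<lambda>y::('s \<times> ereal) \<times> real \<times> ('s \<Rightarrow> 's) \<times> ('s \<Rightarrow> 's). fst (fst y)) \<in> measurable ?N (count_space UNIV)"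
    by measurable
  have choices: "(\<lambda>y::('s \<times> ereal) \<times> real \<times> ('s \<Rightarrow> 's) \<times> ('s \<Rightarrow> 's). snd (snd y)) \<in> measurable ?N (count_space UNIV)"
    by measurable
  have "(\<lambda>y. tr k s y) \<in> measurable ?N config_space" for k s
    unfolding tr_def by measurable
  then have "(\<lambda>y. tr (snd (snd y)) s y) \<in> measurable ?N config_space" for s
    by (rule measurable_compose_countable'[where f = "\<lambda>k y. tr k s y", OF _ choices])
      (auto intro: countable_finite)
  then have "(\<lambda>y. tr (snd (snd y)) (fst (fst y)) y) \<in> measurable ?N config_space"
    by (rule measurable_compose_countable'[where f = "\<lambda>s y. tr (snd (snd y)) s y", OF _ state])
      (auto intro: countable_finite)
  then show ?thesis
    by (rule measurable_cong[THEN iffD1, rotated]) (auto simp: trans_def tr_def split: prod.splits)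
qed

locale fd_ctmc =
  fixes lam :: real and P F :: "'s::finite \<Rightarrow> 's \<Rightarrow> real" and Sfd :: "'s set"
  assumes fdCTMC: "fdCTMC lam P Sfd F"
begin

abbreviation "M \<equiv> step_measure lam P Sfd F"
abbreviation "\<Omega> \<equiv> run_space lam P Sfd F"
abbreviation "time_dist \<equiv> density lborel (exponential_density lam)"
abbreviation "succ_pmf \<equiv> pair_pmf (Pi_pmf UNIV undefined (\<lambda>s. embed_pmf (P s)))
  (Pi_pmf UNIV undefined (\<lambda>s. if s \<in> Sfd then embed_pmf (F s) else return_pmf s))"

lemma step_measure_eq: "M = time_dist \<Otimes>\<^sub>M measure_pmf succ_pmf"
  by (simp add: step_measure_def)

lemma lam_pos: "lam > 0"
  using fdCTMC by (simp add: fdCTMC_def)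

lemma prob_space_time_dist: "prob_space time_dist"
  by (rule prob_space_exponential_density[OF lam_pos])

lemma prob_space_step: "prob_space M"
  unfolding step_measure_eq
  by (intro prob_space_pair prob_space_time_dist prob_space_measure_pmf)

sublocale S: sequence_space M
  using prob_space_step
  by (simp add: sequence_space_def product_prob_space_def product_sigma_finite_def
      product_prob_space_axioms_def prob_space_imp_sigma_finite)

lemma run_space_eq: "\<Omega> = S.S"
  by (simp add: run_space_def)

lemma sets_step_measure: "sets M = sets (borel \<Otimes>\<^sub>M count_space UNIV)"
  unfolding step_measure_def by (intro sets_pair_measure_cong) auto

lemma measurable_run_component[measurable]: "(\<lambda>\<omega>. \<omega> i) \<in> measurable \<Omega> M"
  unfolding run_space_def by (rule measurable_component_singleton) simp

lemma emeasure_run_space_space: "emeasure \<Omega> (space \<Omega>) = 1"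
  by (simp add: run_space_eq S.emeasure_space_1)

lemma nn_integral_run_space_split:
  assumes f: "f \<in> borel_measurable \<Omega>"
  shows "(\<integral>\<^sup>+\<omega>. f \<omega> \<partial>\<Omega>) = (\<integral>\<^sup>+x. \<integral>\<^sup>+\<omega>. f (case_nat x \<omega>) \<partial>\<Omega> \<partial>M)"
proof -
  have m: "(\<lambda>(x, \<omega>). case_nat x \<omega>) \<in> measurable (M \<Otimes>\<^sub>M S.S) S.S"
    by simp
  have "(\<integral>\<^sup>+\<omega>. f \<omega> \<partial>\<Omega>) = (\<integral>\<^sup>+\<omega>. f \<omega> \<partial>distr (M \<Otimes>\<^sub>M S.S) S.S (\<lambda>(x, \<omega>). case_nat x \<omega>))"
    by (simp add: S.PiM_iter run_space_eq)
  also have "\<dots> = (\<integral>\<^sup>+p. f (case_nat (fst p) (snd p)) \<partial>(M \<Otimes>\<^sub>M S.S))"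
    using f by (subst nn_integral_distr[OF m]) (auto simp: run_space_eq split_beta')
  also have "\<dots> = (\<integral>\<^sup>+x. \<integral>\<^sup>+\<omega>. f (case_nat x \<omega>) \<partial>S.S \<partial>M)"
    using f m by (subst S.nn_integral_fst[symmetric])
      (auto simp: run_space_eq split_beta' intro!: measurable_compose[OF _ f])
  finally show ?thesis by (simp add: run_space_eq)
qed

lemma P_nonneg: "P s t \<ge> 0"
  using fdCTMC by (simp add: fdCTMC_def)

lemma F_nonneg: "s \<in> Sfd \<Longrightarrow> F s t \<ge> 0"
  using fdCTMC by (simp add: fdCTMC_def)

lemma nn_integral_P: "(\<integral>\<^sup>+t. ennreal (P s t) \<partial>count_space UNIV) = 1"
  using fdCTMC by (simp add: fdCTMC_def nn_integral_count_space_finite sum_ennreal P_nonneg)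

lemma nn_integral_F: "s \<in> Sfd \<Longrightarrow> (\<integral>\<^sup>+t. ennreal (F s t) \<partial>count_space UNIV) = 1"
  using fdCTMC by (simp add: fdCTMC_def nn_integral_count_space_finite sum_ennreal F_nonneg)

lemma emeasure_succ_pmf_P: "emeasure (measure_pmf succ_pmf) {p. fst p s = v} = ennreal (P s v)"
proof -
  have "map_pmf (\<lambda>p. fst p s) succ_pmf = map_pmf (\<lambda>f. f s) (map_pmf fst succ_pmf)"
    by (simp add: pmf.map_comp o_def)
  also have "\<dots> = embed_pmf (P s)"
    by (simp add: map_fst_pair_pmf Pi_pmf_component)
  finally have dist: "map_pmf (\<lambda>p. fst p s) succ_pmf = embed_pmf (P s)" .
  have "emeasure (measure_pmf succ_pmf) {p. fst p s = v}
      = emeasure (measure_pmf (map_pmf (\<lambda>p. fst p s) succ_pmf)) {v}"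
    by (simp add: vimage_def)
  then show ?thesis
    by (simp add: dist emeasure_pmf_single pmf_embed_pmf[OF P_nonneg nn_integral_P])
qed

lemma emeasure_succ_pmf_F:
  assumes "s \<in> Sfd" shows "emeasure (measure_pmf succ_pmf) {p. snd p s = v} = ennreal (F s v)"
proof -
  have "map_pmf (\<lambda>p. snd p s) succ_pmf = map_pmf (\<lambda>f. f s) (map_pmf snd succ_pmf)"
    by (simp add: pmf.map_comp o_def)
  also have "\<dots> = embed_pmf (F s)"
    using assms by (simp add: map_snd_pair_pmf Pi_pmf_component)
  finally have dist: "map_pmf (\<lambda>p. snd p s) succ_pmf = embed_pmf (F s)" .
  have "emeasure (measure_pmf succ_pmf) {p. snd p s = v}
      = emeasure (measure_pmf (map_pmf (\<lambda>p. snd p s) succ_pmf)) {v}"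
    by (simp add: vimage_def)
  then show ?thesis
    using assms by (simp add: dist emeasure_pmf_single pmf_embed_pmf[OF F_nonneg nn_integral_F])
qed

lemma emeasure_time_dist_atMost: "a \<ge> 0 \<Longrightarrow> emeasure time_dist {..a} = ennreal (1 - exp (- lam * a))"
  using emeasure_erlang_density[OF lam_pos, of 0 a] by (simp add: erlang_CDF_0)

lemma emeasure_time_dist_greaterThan_pos: "emeasure time_dist {a<..} > 0"
proof -
  define b where "b = max a 0"
  have "emeasure time_dist {b<..} = emeasure time_dist (space time_dist - {..b})"
    by (simp add: Compl_eq_Diff_UNIV[symmetric] Compl_atMost)
  also have "\<dots> = 1 - ennreal (1 - exp (- lam * b))"
    by (subst emeasure_compl)
       (simp_all add: b_def emeasure_time_dist_atMost
        prob_space.emeasure_space_1[OF prob_space_time_dist, simplified])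
  also have "\<dots> = ennreal (exp (- lam * b))"
    using ennreal_minus[of "1 - exp (- lam * b)" 1] lam_pos by (simp add: b_def)
  finally have "emeasure time_dist {b<..} > 0" by simp
  also have "emeasure time_dist {b<..} \<le> emeasure time_dist {a<..}"
    by (intro emeasure_mono) (auto simp: b_def)
  finally show ?thesis .
qed

lemma emeasure_time_dist_lessThan_pos: "a > 0 \<Longrightarrow> emeasure time_dist {..<a} > 0"
proof -
  assume a: "a > 0"
  then have "emeasure time_dist {..a/2} > 0"
    using lam_pos by (simp add: emeasure_time_dist_atMost)
  also have "emeasure time_dist {..a/2} \<le> emeasure time_dist {..<a}"
    using a by (intro emeasure_mono) auto
  finally show ?thesis .
qed

lemma emeasure_step_Times:
  "A \<in> sets borel \<Longrightarrow> emeasure M (A \<times> B) = emeasure time_dist A * emeasure (measure_pmf succ_pmf) B"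
  unfolding step_measure_eq by (rule measure_pmf.emeasure_pair_measure_Times) auto

lemma measurable_step_time[measurable]: "fst \<in> measurable M borel"
  unfolding step_measure_eq by (rule measurable_compose[OF measurable_fst]) simp

lemma measurable_step_P_succ[measurable]: "(\<lambda>x. fst (snd x) s) \<in> measurable M (count_space UNIV)"
  unfolding step_measure_eq by (rule measurable_compose[OF measurable_snd]) simp

lemma measurable_step_F_succ[measurable]: "(\<lambda>x. snd (snd x) s) \<in> measurable M (count_space UNIV)"
  unfolding step_measure_eq by (rule measurable_compose[OF measurable_snd]) simp

lemma emeasure_P_move_pos:
  assumes "P s v > 0" "dl > 0"
  shows "emeasure M {x\<in>space M. ereal (fst x) < dl \<and> fst (snd x) s = v} > 0"
proof -
  define a where "a = (if dl = \<infinity> then 1 else real_of_ereal dl)"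
  have a: "a > 0" "ereal a \<le> dl" using assms(2) by (cases dl; auto simp: a_def)+
  have sub: "{..<a} \<times> {p. fst p s = v} \<subseteq> {x\<in>space M. ereal (fst x) < dl \<and> fst (snd x) s = v}"
    using a(2) by (auto simp: step_measure_eq space_pair_measure intro: less_le_trans[of _ "ereal a"])
  have "emeasure M ({..<a} \<times> {p. fst p s = v}) > 0"
    using emeasure_time_dist_lessThan_pos[OF a(1)] assms(1)
    by (simp add: emeasure_step_Times emeasure_succ_pmf_P ennreal_zero_less_mult_iff)
  also have "\<dots> \<le> emeasure M {x\<in>space M. ereal (fst x) < dl \<and> fst (snd x) s = v}"
    by (rule emeasure_mono[OF sub]) measurable
  finally show ?thesis .
qed

lemma emeasure_F_move_pos:
  assumes "s \<in> Sfd" "F s v > 0" "dl < \<infinity>"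
  shows "emeasure M {x\<in>space M. \<not> ereal (fst x) < dl \<and> snd (snd x) s = v} > 0"
proof -
  have sub: "{real_of_ereal dl<..} \<times> {p. snd p s = v}
      \<subseteq> {x\<in>space M. \<not> ereal (fst x) < dl \<and> snd (snd x) s = v}"
    using assms(3) by (cases dl) (auto simp: step_measure_eq space_pair_measure)
  have "emeasure M ({real_of_ereal dl<..} \<times> {p. snd p s = v}) > 0"
    using emeasure_time_dist_greaterThan_pos assms(1,2)
    by (simp add: emeasure_step_Times emeasure_succ_pmf_F ennreal_zero_less_mult_iff)
  also have "\<dots> \<le> emeasure M {x\<in>space M. \<not> ereal (fst x) < dl \<and> snd (snd x) s = v}"
    by (rule emeasure_mono[OF sub]) measurable
  finally show ?thesis .
qed

lemma emeasure_timeout_ge: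
  assumes "dl \<le> ereal D"
  shows "emeasure M {x\<in>space M. \<not> ereal (fst x) < dl} \<ge> emeasure time_dist {D<..}"
proof -
  have sub: "{D<..} \<times> UNIV \<subseteq> {x\<in>space M. \<not> ereal (fst x) < dl}"
    using assms by (auto simp: step_measure_eq space_pair_measure)
      (metis ereal_less_eq(3) not_le order_trans less_imp_le)
  have "emeasure time_dist {D<..} = emeasure M ({D<..} \<times> UNIV)"
    by (simp add: emeasure_step_Times measure_pmf.emeasure_space_1[simplified])
  also have "\<dots> \<le> emeasure M {x\<in>space M. \<not> ereal (fst x) < dl}"
    by (rule emeasure_mono[OF sub]) measurable
  finally show ?thesis .
qed

definition regular_step :: "real \<times> ('s \<Rightarrow> 's) \<times> ('s \<Rightarrow> 's) \<Rightarrow> bool" where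
  "regular_step x \<longleftrightarrow>
     0 \<le> fst x \<and> (\<forall>s. P s (fst (snd x) s) \<noteq> 0) \<and> (\<forall>s\<in>Sfd. F s (snd (snd x) s) \<noteq> 0)"

lemma AE_regular_step: "AE x in M. regular_step x"
proof -
  interpret time_dist: prob_space time_dist by (rule prob_space_time_dist)
  interpret pair_sigma_finite time_dist "measure_pmf succ_pmf"
    by (intro pair_sigma_finite.intro prob_space_imp_sigma_finite prob_space_time_dist
        prob_space_measure_pmf)
  have "AE y in measure_pmf succ_pmf. (\<forall>s. P s (fst y s) \<noteq> 0) \<and> (\<forall>s\<in>Sfd. F s (snd y s) \<noteq> 0)"
    by (auto simp: AE_measure_pmf_iff set_Pi_pmf PiE_dflt_def set_embed_pmf[OF P_nonneg nn_integral_P]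
        set_embed_pmf[OF F_nonneg nn_integral_F] split: if_splits)
  moreover have "AE t in time_dist. 0 \<le> t"
    by (subst AE_density) (auto simp: exponential_density_def)
  ultimately show ?thesis
    unfolding step_measure_eq regular_step_def
    by (intro AE_pair_measure) (measurable, auto elim!: AE_mp)
qed

end

locale fd_ctmc_delays = fd_ctmc lam P F Sfd for lam :: real and P F :: "'s::finite \<Rightarrow> 's \<Rightarrow> real"
  and Sfd :: "'s set" +
  fixes G :: "'s set" and d :: "'s \<Rightarrow> real"
  assumes d_pos: "\<forall>s\<in>Sfd. d s > 0"
begin

primrec run :: "'s \<times> ereal \<Rightarrow> (nat \<Rightarrow> real \<times> ('s \<Rightarrow> 's) \<times> ('s \<Rightarrow> 's)) \<Rightarrow> nat \<Rightarrow> 's \<times> ereal" where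
  "run c \<omega> 0 = c"
| "run c \<omega> (Suc n) = trans Sfd d (run c \<omega> n) (\<omega> n)"

lemma run_case_nat_Suc: "run c (case_nat x \<omega>) (Suc n) = run (trans Sfd d c x) \<omega> n"
  by (induction n) auto

lemma cfg_eq_run: "cfg Sfd d s \<omega> n = run (s, init_delay Sfd d s) \<omega> n"
  by (induction n) auto

lemma measurable_trans_step[measurable]: "(\<lambda>x. trans Sfd d c x) \<in> measurable M config_space"
proof -
  have "(\<lambda>x. trans Sfd d c x) \<in> measurable (borel \<Otimes>\<^sub>M count_space UNIV) config_space"
    using measurable_compose_Pair1[OF _ trans_measurable[of Sfd d], of c]
    by (simp add: space_pair_measure)
  then show ?thesis by (simp only: measurable_cong_sets[OF sets_step_measure refl])
qed

lemma measurable_run: "(\<lambda>p. run (fst p) (snd p) n) \<in> measurable (config_space \<Otimes>\<^sub>M \<Omega>) config_space"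
proof (induction n)
  case 0
  show ?case by (simp only: run.simps) (rule measurable_fst)
next
  case (Suc n)
  have "(\<lambda>p. snd p n) \<in> measurable (config_space \<Otimes>\<^sub>M \<Omega>) M"
    unfolding run_space_def
    by (rule measurable_compose[OF measurable_snd measurable_component_singleton]) (rule UNIV_I)
  then have "(\<lambda>p. snd p n) \<in> measurable (config_space \<Otimes>\<^sub>M \<Omega>) (borel \<Otimes>\<^sub>M count_space UNIV)"
    by (simp only: measurable_cong_sets[OF refl sets_step_measure])
  with Suc have "(\<lambda>p. (run (fst p) (snd p) n, snd p n))
      \<in> measurable (config_space \<Otimes>\<^sub>M \<Omega>) (config_space \<Otimes>\<^sub>M (borel \<Otimes>\<^sub>M count_space UNIV))"
    by (rule measurable_Pair)
  from measurable_compose[OF this trans_measurable[of Sfd d]] show ?case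
    by (simp only: run.simps split_conv)
qed

lemma measurable_run_state[measurable]:
  "(\<lambda>p. fst (run (fst p) (snd p) n)) \<in> measurable (config_space \<Otimes>\<^sub>M \<Omega>) (count_space UNIV)"
  using measurable_compose[OF measurable_run measurable_fst] by simp

definition avoids_goal_upto :: "nat \<Rightarrow> 's \<times> ereal \<Rightarrow> (nat \<Rightarrow> real \<times> ('s \<Rightarrow> 's) \<times> ('s \<Rightarrow> 's)) \<Rightarrow> bool" where
  "avoids_goal_upto k c \<omega> \<longleftrightarrow> (\<forall>n\<in>{1..k}. fst (run c \<omega> n) \<notin> G)"

definition avoids_goal :: "'s \<times> ereal \<Rightarrow> (nat \<Rightarrow> real \<times> ('s \<Rightarrow> 's) \<times> ('s \<Rightarrow> 's)) \<Rightarrow> bool" where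
  "avoids_goal c \<omega> \<longleftrightarrow> (\<forall>n>0. fst (run c \<omega> n) \<notin> G)"

lemma avoids_goal_upto_Suc:
  "avoids_goal_upto (Suc k) c (case_nat x \<omega>) \<longleftrightarrow>
     fst (trans Sfd d c x) \<notin> G \<and> avoids_goal_upto k (trans Sfd d c x) \<omega>"
proof -
  have ball_Suc: "(\<forall>n\<in>{1..Suc k}. Q n) \<longleftrightarrow> Q (Suc 0) \<and> (\<forall>m\<in>{1..k}. Q (Suc m))" for Q
  proof safe
    fix n assume "Q (Suc 0)" "\<forall>m\<in>{1..k}. Q (Suc m)" "n \<in> {1..Suc k}"
    then show "Q n" by (cases n) (auto, metis Suc_le_eq atLeastAtMost_iff not_gr0 One_nat_def)
  qed auto
  show ?thesis
    unfolding avoids_goal_upto_def ball_Suc run_case_nat_Suc by simp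
qed

lemma avoids_goal_Suc:
  "avoids_goal c (case_nat x \<omega>) \<longleftrightarrow> fst (trans Sfd d c x) \<notin> G \<and> avoids_goal (trans Sfd d c x) \<omega>"
proof -
  have "avoids_goal c (case_nat x \<omega>) \<longleftrightarrow> (\<forall>m. fst (run c (case_nat x \<omega>) (Suc m)) \<notin> G)"
    unfolding avoids_goal_def by (metis gr0_implies_Suc zero_less_Suc)
  also have "\<dots> \<longleftrightarrow> (\<forall>m. fst (run (trans Sfd d c x) \<omega> m) \<notin> G)"
    by (simp only: run_case_nat_Suc)
  also have "\<dots> \<longleftrightarrow> fst (trans Sfd d c x) \<notin> G \<and> avoids_goal (trans Sfd d c x) \<omega>"
    unfolding avoids_goal_def by (metis gr0_implies_Suc run.simps(1) zero_less_Suc not0_implies_Suc)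
  finally show ?thesis .
qed

lemma measurable_avoids_goal_upto[measurable]:
  "Measurable.pred (config_space \<Otimes>\<^sub>M \<Omega>) (\<lambda>p. avoids_goal_upto k (fst p) (snd p))"
  unfolding avoids_goal_upto_def by measurable

lemma measurable_avoids_goal[measurable]:
  "Measurable.pred (config_space \<Otimes>\<^sub>M \<Omega>) (\<lambda>p. avoids_goal (fst p) (snd p))"
  unfolding avoids_goal_def by measurable

lemma measurable_avoids_goal_upto_run[measurable]: "Measurable.pred \<Omega> (avoids_goal_upto k c)"
  using measurable_compose_Pair1[OF _ measurable_avoids_goal_upto, of c k]
  by (simp add: space_pair_measure)

lemma measurable_avoids_goal_run[measurable]: "Measurable.pred \<Omega> (avoids_goal c)"
  using measurable_compose_Pair1[OF _ measurable_avoids_goal, of c]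
  by (simp add: space_pair_measure)

definition avoid_upto_prob :: "nat \<Rightarrow> 's \<times> ereal \<Rightarrow> ennreal" where
  "avoid_upto_prob k c = (\<integral>\<^sup>+\<omega>. (if avoids_goal_upto k c \<omega> then 1 else 0) \<partial>\<Omega>)"

definition avoid_prob :: "'s \<times> ereal \<Rightarrow> ennreal" where
  "avoid_prob c = (\<integral>\<^sup>+\<omega>. (if avoids_goal c \<omega> then 1 else 0) \<partial>\<Omega>)"

lemma measurable_avoid_upto_prob[measurable]: "avoid_upto_prob k \<in> borel_measurable config_space"
  unfolding avoid_upto_prob_def run_space_eq
  by (rule S.borel_measurable_nn_integral) (simp only: run_space_eq[symmetric]; measurable)

lemma measurable_avoid_prob[measurable]: "avoid_prob \<in> borel_measurable config_space"
  unfolding avoid_prob_def run_space_eq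
  by (rule S.borel_measurable_nn_integral) (simp only: run_space_eq[symmetric]; measurable)

lemma avoid_upto_prob_0: "avoid_upto_prob 0 c = 1"
  unfolding avoid_upto_prob_def avoids_goal_upto_def using emeasure_run_space_space by simp

lemma avoid_upto_prob_Suc:
  "avoid_upto_prob (Suc k) c =
     (\<integral>\<^sup>+x. (if fst (trans Sfd d c x) \<in> G then 0 else avoid_upto_prob k (trans Sfd d c x)) \<partial>M)"
  unfolding avoid_upto_prob_def
  by (subst nn_integral_run_space_split) (auto simp: avoids_goal_upto_Suc intro!: nn_integral_cong)

lemma avoid_prob_unfold:
  "avoid_prob c = (\<integral>\<^sup>+x. (if fst (trans Sfd d c x) \<in> G then 0 else avoid_prob (trans Sfd d c x)) \<partial>M)"
  unfolding avoid_prob_def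
  by (subst nn_integral_run_space_split) (auto simp: avoids_goal_Suc intro!: nn_integral_cong)

lemma avoid_upto_prob_le_1: "avoid_upto_prob k c \<le> 1"
proof -
  have "avoid_upto_prob k c \<le> (\<integral>\<^sup>+\<omega>. 1 \<partial>\<Omega>)"
    unfolding avoid_upto_prob_def by (intro nn_integral_mono) auto
  then show ?thesis using emeasure_run_space_space by simp
qed

lemma avoid_upto_prob_antimono: "k \<le> k' \<Longrightarrow> avoid_upto_prob k' c \<le> avoid_upto_prob k c"
  unfolding avoid_upto_prob_def avoids_goal_upto_def by (intro nn_integral_mono) auto

lemma avoid_prob_le_avoid_upto_prob: "avoid_prob c \<le> avoid_upto_prob k c"
  unfolding avoid_upto_prob_def avoid_prob_def avoids_goal_def avoids_goal_upto_def
  by (intro nn_integral_mono) auto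

lemma avoid_prob_eq_INF: "avoid_prob c = (INF k. avoid_upto_prob k c)"
proof -
  have "(\<integral>\<^sup>+\<omega>. (INF k. (if avoids_goal_upto k c \<omega> then 1 else 0)) \<partial>\<Omega>) = (INF k. avoid_upto_prob k c)"
    unfolding avoid_upto_prob_def
  proof (rule nn_integral_monotone_convergence_INF_decseq)
    show "decseq (\<lambda>k \<omega>. if avoids_goal_upto k c \<omega> then 1 else 0::ennreal)"
      by (rule decseq_SucI) (auto simp: le_fun_def avoids_goal_upto_def)
    show "(\<integral>\<^sup>+\<omega>. (if avoids_goal_upto i c \<omega> then 1 else 0) \<partial>\<Omega>) < \<infinity>" for i
      using avoid_upto_prob_le_1[of i c] unfolding avoid_upto_prob_def by (rule le_less_trans) simp
  qed measurable
  moreover have "(INF k. (if avoids_goal_upto k c \<omega> then 1 else 0::ennreal)) =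
      (if avoids_goal c \<omega> then 1 else 0)" for \<omega>
  proof (cases "avoids_goal c \<omega>")
    case False
    then obtain n where "n > 0" "fst (run c \<omega> n) \<in> G" by (auto simp: avoids_goal_def)
    then have "\<not> avoids_goal_upto n c \<omega>" by (auto simp: avoids_goal_upto_def)
    then show ?thesis
      using False by (intro antisym INF_lower2[of n]) auto
  qed (auto simp: avoids_goal_def avoids_goal_upto_def)
  ultimately show ?thesis by (simp add: avoid_prob_def)
qed

definition delay_bound :: real where
  "delay_bound = (\<Sum>s\<in>Sfd. d s)"

lemma d_le_delay_bound: "s \<in> Sfd \<Longrightarrow> d s \<le> delay_bound"
  unfolding delay_bound_def using d_pos by (intro member_le_sum) auto

definition valid_cfg :: "'s \<times> ereal \<Rightarrow> bool" where
  "valid_cfg c \<longleftrightarrow>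
     (if fst c \<in> Sfd then 0 < snd c \<and> snd c \<le> ereal delay_bound else snd c = \<infinity>)"

lemma valid_cfg_init: "valid_cfg (u, init_delay Sfd d u)"
  using d_pos d_le_delay_bound by (auto simp: valid_cfg_def init_delay_def)

lemma trans_regular_step:
  assumes c: "valid_cfg c" and x: "regular_step x"
  shows "valid_cfg (trans Sfd d c x) \<and> edge P F Sfd (fst c) (fst (trans Sfd d c x))"
proof -
  obtain s dl t ps fs where cx: "c = (s, dl)" "x = (t, ps, fs)" by (cases c, cases x)
  have "0 \<le> t" "P s (ps s) \<noteq> 0" "s \<in> Sfd \<Longrightarrow> F s (fs s) \<noteq> 0"
    using x by (auto simp: regular_step_def cx)
  moreover have "s \<in> Sfd \<Longrightarrow> \<exists>r. dl = ereal r \<and> 0 < r \<and> r \<le> delay_bound"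
    using c by (cases dl) (auto simp: valid_cfg_def cx)
  moreover have "s \<notin> Sfd \<Longrightarrow> dl = \<infinity>"
    using c by (auto simp: valid_cfg_def cx)
  ultimately show ?thesis
    using d_pos d_le_delay_bound
    by (auto simp: trans_def cx edge_def valid_cfg_def init_delay_def)
qed

lemma emeasure_trans_to_pos:
  assumes c: "valid_cfg c" and e: "edge P F Sfd (fst c) u"
  shows "emeasure M {x\<in>space M. fst (trans Sfd d c x) = u} > 0"
proof -
  obtain s dl where c_eq: "c = (s, dl)" by (cases c)
  show ?thesis
  proof (cases "P s u \<noteq> 0")
    case True
    have "{x\<in>space M. ereal (fst x) < dl \<and> fst (snd x) s = u} \<subseteq> {x\<in>space M. fst (trans Sfd d c x) = u}"
      by (auto simp: trans_def c_eq)
    then have "emeasure M {x\<in>space M. ereal (fst x) < dl \<and> fst (snd x) s = u}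
        \<le> emeasure M {x\<in>space M. fst (trans Sfd d c x) = u}"
      by (intro emeasure_mono) measurable
    moreover have "dl > 0"
      using c by (cases "s \<in> Sfd") (auto simp: valid_cfg_def c_eq)
    ultimately show ?thesis
      using emeasure_P_move_pos[of s u dl] True P_nonneg[of s u] by simp
  next
    case False
    then have s: "s \<in> Sfd" and "F s u > 0"
      using e F_nonneg[of s u] by (auto simp: edge_def c_eq)
    have "{x\<in>space M. \<not> ereal (fst x) < dl \<and> snd (snd x) s = u} \<subseteq> {x\<in>space M. fst (trans Sfd d c x) = u}"
      by (auto simp: trans_def c_eq)
    then have "emeasure M {x\<in>space M. \<not> ereal (fst x) < dl \<and> snd (snd x) s = u}
        \<le> emeasure M {x\<in>space M. fst (trans Sfd d c x) = u}"
      by (intro emeasure_mono) measurable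
    moreover have "dl < \<infinity>"
      using c s by (auto simp: valid_cfg_def c_eq)
    ultimately show ?thesis
      using emeasure_F_move_pos[OF s \<open>F s u > 0\<close>] by (meson less_le_trans)
  qed
qed

lemma avoid_upto_prob_dead_end:
  assumes "valid_cfg c" "\<not> goal_reachable P F Sfd G (fst c)"
  shows "avoid_upto_prob k c = 1"
  using assms
proof (induction k arbitrary: c)
  case 0
  then show ?case by (simp add: avoid_upto_prob_0)
next
  case (Suc k)
  have "avoid_upto_prob (Suc k) c = (\<integral>\<^sup>+x. 1 \<partial>M)"
    unfolding avoid_upto_prob_Suc
  proof (rule nn_integral_cong_AE)
    show "AE x in M. (if fst (trans Sfd d c x) \<in> G then 0 else avoid_upto_prob k (trans Sfd d c x)) = 1"
      using AE_regular_step
    proof eventually_elim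
      case (elim x)
      with trans_regular_step Suc.prems goal_reachable_step show ?case
        by (metis Suc.IH)
    qed
  qed
  then show ?case
    using prob_space.emeasure_space_1[OF prob_space_step] by simp
qed

lemma avoid_prob_dead_end: "valid_cfg c \<Longrightarrow> \<not> goal_reachable P F Sfd G (fst c) \<Longrightarrow> avoid_prob c = 1"
  by (simp add: avoid_prob_eq_INF avoid_upto_prob_dead_end)

lemma avoid_prob_pos_if_dead_end_reachable:
  assumes "reachable_avoiding P F Sfd G s u" "\<not> goal_reachable P F Sfd G u"
  shows "valid_cfg c \<Longrightarrow> fst c = s \<Longrightarrow> avoid_prob c > 0"
  using assms(1) unfolding reachable_avoiding_def
proof (induction arbitrary: c rule: converse_rtranclp_induct)
  case base
  then show ?case using avoid_prob_dead_end assms(2) by simp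
next
  case (step s t)
  show ?case
    unfolding avoid_prob_unfold[of c]
  proof (rule nn_integral_pos_if_pos_on[where Q = "\<lambda>x. fst (trans Sfd d c x) = t"])
    show "emeasure M {x\<in>space M. fst (trans Sfd d c x) = t} > 0"
      using emeasure_trans_to_pos[OF step.prems(1)] step.hyps(1) step.prems(2) by simp
    show "AE x in M. fst (trans Sfd d c x) = t \<longrightarrow>
        0 < (if fst (trans Sfd d c x) \<in> G then 0 else avoid_prob (trans Sfd d c x))"
      using AE_regular_step
      by eventually_elim (use trans_regular_step[OF step.prems(1)] step.hyps(1) step.IH in auto)
  qed measurable
qed

lemma avoid_upto_prob_Suc_less_1:
  assumes c: "valid_cfg c" and e: "edge P F Sfd (fst c) t"
    and IH: "\<And>c'. valid_cfg c' \<Longrightarrow> fst c' = t \<Longrightarrow> t \<notin> G \<Longrightarrow> avoid_upto_prob k c' < 1"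
  shows "avoid_upto_prob (Suc k) c < 1"
  unfolding avoid_upto_prob_Suc
proof (rule prob_space.nn_integral_less_one_if_gap[OF prob_space_step])
  show "emeasure M {x\<in>space M. fst (trans Sfd d c x) = t} > 0"
    using emeasure_trans_to_pos[OF c e] .
  show "AE x in M. fst (trans Sfd d c x) = t \<longrightarrow>
      (if fst (trans Sfd d c x) \<in> G then 0 else avoid_upto_prob k (trans Sfd d c x)) < 1"
    using AE_regular_step by eventually_elim (use trans_regular_step[OF c] IH in auto)
qed (auto simp: avoid_upto_prob_le_1)

lemma avoid_upto_prob_less_1_if_goal_reachable:
  assumes "goal_reachable P F Sfd G s"
  shows "\<exists>k. \<forall>c. valid_cfg c \<and> fst c = s \<longrightarrow> avoid_upto_prob k c < 1"
proof -
  obtain g where "g \<in> G" "(edge P F Sfd)\<^sup>+\<^sup>+ s g"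
    using assms by (auto simp: goal_reachable_def)
  from this(2) show ?thesis
  proof (induction rule: converse_tranclp_induct)
    case (base s)
    then show ?case
      using \<open>g \<in> G\<close> by (intro exI[of _ "Suc 0"] allI impI avoid_upto_prob_Suc_less_1[of _ g]) auto
  next
    case (step s t)
    then obtain k where "\<forall>c. valid_cfg c \<and> fst c = t \<longrightarrow> avoid_upto_prob k c < 1" by auto
    with step show ?case
      by (intro exI[of _ "Suc k"] allI impI avoid_upto_prob_Suc_less_1[of _ t]) auto
  qed
qed

lemma avoid_upto_prob_add_le:
  assumes inv: "\<And>c x. I c \<Longrightarrow> regular_step x \<Longrightarrow> fst (trans Sfd d c x) \<notin> G \<Longrightarrow> I (trans Sfd d c x)"
    and bound: "\<And>c. I c \<Longrightarrow> avoid_upto_prob k c \<le> B"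
  shows "I c \<Longrightarrow> avoid_upto_prob (j + k) c \<le> B * avoid_upto_prob j c"
proof (induction j arbitrary: c)
  case 0
  then show ?case using bound by (simp add: avoid_upto_prob_0)
next
  case (Suc j)
  have "avoid_upto_prob (Suc j + k) c
      \<le> (\<integral>\<^sup>+x. B * (if fst (trans Sfd d c x) \<in> G then 0 else avoid_upto_prob j (trans Sfd d c x)) \<partial>M)"
    unfolding add_Suc avoid_upto_prob_Suc
    using AE_regular_step
    by (intro nn_integral_mono_AE) (auto elim!: AE_mp dest!: inv[OF Suc.prems] Suc.IH)
  also have "\<dots> = B * avoid_upto_prob (Suc j) c"
    unfolding avoid_upto_prob_Suc by (rule nn_integral_cmult) measurable
  finally show ?case .
qed

definition fresh_cfg :: "'s \<Rightarrow> 's \<times> ereal" where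
  "fresh_cfg u = (u, init_delay Sfd d u)"

lemma trans_timeout: "\<not> ereal (fst x) < snd c \<Longrightarrow> trans Sfd d c x = fresh_cfg (snd (snd x) (fst c))"
  by (auto simp: trans_def fresh_cfg_def split: prod.splits)

context
  fixes s0 :: 's
  assumes no_dead_end: "\<not> dead_end_reachable P F Sfd G s0"
begin

definition avoiding_cfg :: "'s \<times> ereal \<Rightarrow> bool" where
  "avoiding_cfg c \<longleftrightarrow> valid_cfg c \<and> reachable_avoiding P F Sfd G s0 (fst c)"

lemma avoiding_cfg_init: "avoiding_cfg (fresh_cfg s0)"
  using valid_cfg_init by (simp add: avoiding_cfg_def fresh_cfg_def reachable_avoiding_def)

lemma avoiding_cfg_trans:
  "avoiding_cfg c \<Longrightarrow> regular_step x \<Longrightarrow> fst (trans Sfd d c x) \<notin> G \<Longrightarrow> avoiding_cfg (trans Sfd d c x)"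
  using trans_regular_step[of c x] by (auto simp: avoiding_cfg_def intro: reachable_avoiding_step)

lemma uniform_horizon:
  "\<exists>K. \<forall>c. avoiding_cfg c \<longrightarrow> avoid_upto_prob K c < 1"
proof -
  let ?A = "{u. reachable_avoiding P F Sfd G s0 u}"
  have "\<forall>u\<in>?A. \<exists>k. \<forall>c. valid_cfg c \<and> fst c = u \<longrightarrow> avoid_upto_prob k c < 1"
    using no_dead_end avoid_upto_prob_less_1_if_goal_reachable
    by (auto simp: dead_end_reachable_def)
  then obtain k where k: "\<And>u c. u \<in> ?A \<Longrightarrow> valid_cfg c \<Longrightarrow> fst c = u \<Longrightarrow> avoid_upto_prob (k u) c < 1"
    by metis
  have "avoid_upto_prob (Max (k ` ?A)) c < 1" if "avoiding_cfg c" for c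
  proof -
    have "fst c \<in> ?A" "valid_cfg c" using that by (auto simp: avoiding_cfg_def)
    then have "avoid_upto_prob (Max (k ` ?A)) c \<le> avoid_upto_prob (k (fst c)) c"
      by (intro avoid_upto_prob_antimono Max_ge) auto
    also have "\<dots> < 1" using k \<open>fst c \<in> ?A\<close> \<open>valid_cfg c\<close> by blast
    finally show ?thesis .
  qed
  then show ?thesis by blast
qed

definition horizon :: nat where
  "horizon = (SOME K. \<forall>c. avoiding_cfg c \<longrightarrow> avoid_upto_prob K c < 1)"

lemma avoid_upto_prob_horizon: "avoiding_cfg c \<Longrightarrow> avoid_upto_prob horizon c < 1"
  using someI_ex[OF uniform_horizon] unfolding horizon_def by blast

definition fresh_bound :: ennreal where
  "fresh_bound = Max ((\<lambda>u. avoid_upto_prob horizon (fresh_cfg u)) ` {u. avoiding_cfg (fresh_cfg u)})"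

lemma fresh_bound_ge: "avoiding_cfg (fresh_cfg u) \<Longrightarrow> avoid_upto_prob horizon (fresh_cfg u) \<le> fresh_bound"
  unfolding fresh_bound_def by (intro Max_ge) auto

lemma fresh_bound_less_1: "fresh_bound < 1"
proof -
  have "fresh_bound \<in> (\<lambda>u. avoid_upto_prob horizon (fresh_cfg u)) ` {u. avoiding_cfg (fresh_cfg u)}"
    unfolding fresh_bound_def using avoiding_cfg_init by (intro Max_in) auto
  then obtain u where "avoiding_cfg (fresh_cfg u)" "fresh_bound = avoid_upto_prob horizon (fresh_cfg u)"
    by blast
  then show ?thesis using avoid_upto_prob_horizon by simp
qed

definition decay_rate :: ennreal where
  "decay_rate = max fresh_bound (1 - (1 - fresh_bound) * emeasure time_dist {delay_bound<..})"

lemma decay_rate_less_1: "decay_rate < 1"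
proof -
  have "0 < (1 - fresh_bound) * emeasure time_dist {delay_bound<..}"
    using fresh_bound_less_1 emeasure_time_dist_greaterThan_pos
    by (simp add: ennreal_zero_less_mult_iff diff_gr0_ennreal)
  moreover have "(1 - fresh_bound) * emeasure time_dist {delay_bound<..} \<le> 1 * 1"
    using prob_space.emeasure_le_1[OF prob_space_time_dist] by (intro mult_mono) auto
  ultimately show ?thesis
    using fresh_bound_less_1 by (simp add: decay_rate_def ennreal_one_minus_less_one)
qed

text \<open>
  A configuration without fixed-delay transition is fresh. Otherwise its remaining delay is at most
  the delay bound, so with probability at least P(Exp(\<lambda>) > delay_bound) the next step is a timeout,
  which leads to a fresh configuration.
\<close>

lemma avoid_upto_prob_Suc_horizon_le: "avoiding_cfg c \<Longrightarrow> avoid_upto_prob (Suc horizon) c \<le> decay_rate"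
proof (cases "fst c \<in> Sfd")
  case False
  assume c: "avoiding_cfg c"
  then have "c = fresh_cfg (fst c)"
    using False by (cases c) (auto simp: avoiding_cfg_def valid_cfg_def fresh_cfg_def init_delay_def)
  then have "avoid_upto_prob (Suc horizon) c \<le> fresh_bound"
    using c avoid_upto_prob_antimono[of horizon "Suc horizon" c] fresh_bound_ge[of "fst c"] by auto
  then show ?thesis by (simp add: decay_rate_def le_max_iff_disj)
next
  case True
  assume c: "avoiding_cfg c"
  let ?timeout = "\<lambda>x. \<not> ereal (fst x) < snd c"
  have "avoid_upto_prob (Suc horizon) c
      \<le> 1 - (1 - fresh_bound) * emeasure M {x\<in>space M. ?timeout x}"
    unfolding avoid_upto_prob_Suc
  proof (rule prob_space.nn_integral_le_one_minus_gap[OF prob_space_step])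
    show "AE x in M. ?timeout x \<longrightarrow>
        (if fst (trans Sfd d c x) \<in> G then 0 else avoid_upto_prob horizon (trans Sfd d c x)) \<le> fresh_bound"
      using AE_regular_step
      by eventually_elim (auto simp: trans_timeout dest: avoiding_cfg_trans[OF c] intro!: fresh_bound_ge)
  qed (auto simp: avoid_upto_prob_le_1)
  also have "\<dots> \<le> 1 - (1 - fresh_bound) * emeasure time_dist {delay_bound<..}"
    using c True emeasure_timeout_ge[of "snd c" delay_bound]
    by (intro ennreal_minus_mono mult_left_mono) (auto simp: avoiding_cfg_def valid_cfg_def)
  finally show ?thesis by (simp add: decay_rate_def le_max_iff_disj)
qed

lemma avoid_upto_prob_geometric: "avoiding_cfg c \<Longrightarrow> avoid_upto_prob (m * Suc horizon) c \<le> decay_rate ^ m"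
proof (induction m arbitrary: c)
  case 0
  then show ?case by (simp add: avoid_upto_prob_0)
next
  case (Suc m)
  have "avoid_upto_prob (Suc horizon + m * Suc horizon) c \<le> decay_rate ^ m * avoid_upto_prob (Suc horizon) c"
    by (rule avoid_upto_prob_add_le[where I = avoiding_cfg, OF avoiding_cfg_trans Suc.IH Suc.prems])
  also have "\<dots> \<le> decay_rate ^ m * decay_rate"
    using avoid_upto_prob_Suc_horizon_le[OF Suc.prems] by (intro mult_left_mono) auto
  finally show ?case by (simp only: mult_Suc power_Suc mult.commute)
qed

lemma decay_rate_real: obtains b where "0 \<le> b" "b < 1" "decay_rate = ennreal b"
proof -
  have "decay_rate < top" using decay_rate_less_1 ennreal_one_less_top by (rule less_trans)
  then obtain b where "b \<ge> 0" "decay_rate = ennreal b" unfolding less_top_ennreal by blast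
  with decay_rate_less_1 show ?thesis by (intro that) (auto simp: ennreal_less_one_iff)
qed

lemma suminf_avoid_upto_prob_finite: "avoiding_cfg c \<Longrightarrow> (\<Sum>i. avoid_upto_prob i c) < top"
proof -
  assume c: "avoiding_cfg c"
  obtain b where b: "0 \<le> b" "b < 1" "decay_rate = ennreal b" by (rule decay_rate_real)
  show ?thesis
  proof (rule suminf_less_top_if_geometric_blocks[of "Suc horizon" b])
    fix i
    have "avoid_upto_prob i c \<le> avoid_upto_prob (i div Suc horizon * Suc horizon) c"
      by (intro avoid_upto_prob_antimono div_times_less_eq_dividend)
    also have "\<dots> \<le> decay_rate ^ (i div Suc horizon)" by (rule avoid_upto_prob_geometric[OF c])
    finally show "avoid_upto_prob i c \<le> ennreal (b ^ (i div Suc horizon))"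
      using b by (simp add: ennreal_power)
  qed (use b in auto)
qed

lemma avoid_prob_eq_0: "avoiding_cfg c \<Longrightarrow> avoid_prob c = 0"
proof -
  assume c: "avoiding_cfg c"
  obtain b where b: "0 \<le> b" "b < 1" "decay_rate = ennreal b" by (rule decay_rate_real)
  have "avoid_prob c \<le> ennreal (b ^ m)" for m
    using avoid_prob_le_avoid_upto_prob[of c "m * Suc horizon"] avoid_upto_prob_geometric[OF c, of m] b
    by (simp add: ennreal_power)
  moreover have "(\<lambda>m. ennreal (b ^ m)) \<longlonglongrightarrow> ennreal 0"
    using b by (intro tendsto_ennrealI LIMSEQ_power_zero) auto
  ultimately have "avoid_prob c \<le> ennreal 0" by (intro LIMSEQ_le_const) auto
  then show ?thesis by simp
qed

end

lemma nn_integral_abs_time_finite: "(\<integral>\<^sup>+t. ennreal \<bar>t\<bar> \<partial>time_dist) < top"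
proof -
  have "(\<integral>\<^sup>+t. ennreal \<bar>t\<bar> \<partial>time_dist) = (\<integral>\<^sup>+t. ennreal (exponential_density lam t) * ennreal \<bar>t\<bar> \<partial>lborel)"
    by (rule nn_integral_density) (auto simp: exponential_density_nonneg lam_pos)
  also have "\<dots> = (\<integral>\<^sup>+t. ennreal (erlang_density 0 lam t * t ^ 1) \<partial>lborel)"
    by (intro nn_integral_cong)
      (auto simp: exponential_density_def erlang_density_def ennreal_mult'' lam_pos)
  also have "\<dots> = fact (0 + 1) / (fact 0 * lam ^ 1)"
    by (rule nn_integral_erlang_ith_moment[OF lam_pos])
  finally show ?thesis by simp
qed

context
  fixes R :: "'s \<Rightarrow> real" and IP IF :: "'s \<Rightarrow> 's \<Rightarrow> real"
  assumes costs: "cost_structure R IP IF"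
begin

definition rate_bound :: real where
  "rate_bound = (\<Sum>s\<in>UNIV. R s)"

definition impulse_bound :: real where
  "impulse_bound = (\<Sum>s\<in>UNIV. \<Sum>t\<in>UNIV. IP s t + IF s t)"

definition step_cost_bound :: "real \<times> ('s \<Rightarrow> 's) \<times> ('s \<Rightarrow> 's) \<Rightarrow> ennreal" where
  "step_cost_bound x = ennreal (rate_bound * \<bar>fst x\<bar> + impulse_bound)"

lemma R_nonneg: "0 \<le> R s" and IP_nonneg: "0 \<le> IP s t" and IF_nonneg: "0 \<le> IF s t"
  using costs by (auto simp: cost_structure_def)

lemma R_le_rate_bound: "R s \<le> rate_bound"
  unfolding rate_bound_def by (rule member_le_sum) (auto simp: R_nonneg)

lemma impulses_le_impulse_bound: "IP s t + IF s t \<le> impulse_bound"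
proof -
  have "IP s t + IF s t \<le> (\<Sum>t\<in>UNIV. IP s t + IF s t)"
    by (rule member_le_sum) (auto intro: add_nonneg_nonneg IP_nonneg IF_nonneg)
  also have "\<dots> \<le> impulse_bound"
    unfolding impulse_bound_def
    by (rule member_le_sum[where f = "\<lambda>s. \<Sum>t\<in>UNIV. IP s t + IF s t"])
      (auto intro!: sum_nonneg add_nonneg_nonneg IP_nonneg IF_nonneg)
  finally show ?thesis .
qed

lemma step_cost_le_bound: "step_cost R IP IF c x \<le> step_cost_bound x"
proof -
  obtain s dl t ps fs where cx: "c = (s, dl)" "x = (t, ps, fs)" by (cases c, cases x)
  have rate: "\<bar>t\<bar> * R s \<le> rate_bound * \<bar>t\<bar>"
    using R_le_rate_bound[of s] by (simp add: mult.commute mult_left_mono)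
  have "t * R s \<le> \<bar>t\<bar> * R s"
    using R_nonneg[of s] by (intro mult_right_mono) auto
  moreover have "\<not> ereal t < dl \<Longrightarrow> real_of_ereal dl * R s \<le> \<bar>t\<bar> * R s"
    using R_nonneg[of s] by (intro mult_right_mono) (cases dl; auto)
  ultimately show ?thesis
    using rate impulses_le_impulse_bound[of s "ps s"] impulses_le_impulse_bound[of s "fs s"]
      IF_nonneg[of s "ps s"] IP_nonneg[of s "fs s"]
    by (auto simp: step_cost_def step_cost_bound_def cx intro!: ennreal_leI)
qed

lemma measurable_step_cost_bound[measurable]: "step_cost_bound \<in> borel_measurable M"
  unfolding step_cost_bound_def by measurable

lemma nn_integral_step_cost_bound_finite: "(\<integral>\<^sup>+x. step_cost_bound x \<partial>M) < top"
proof -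
  have "0 \<le> rate_bound" using R_le_rate_bound R_nonneg order.trans by blast
  moreover have "0 \<le> impulse_bound"
    using impulses_le_impulse_bound IP_nonneg IF_nonneg add_nonneg_nonneg order.trans by blast
  ultimately have "(\<integral>\<^sup>+x. step_cost_bound x \<partial>M)
      = (\<integral>\<^sup>+t. ennreal rate_bound * ennreal \<bar>t\<bar> + ennreal impulse_bound \<partial>time_dist)"
    unfolding step_measure_eq step_cost_bound_def
    by (subst sigma_finite_measure.nn_integral_fst[symmetric,
          OF prob_space_imp_sigma_finite[OF prob_space_measure_pmf]])
      (auto simp: measure_pmf.emeasure_space_1[simplified] ennreal_plus[symmetric]
        ennreal_mult[symmetric] simp del: ennreal_plus intro!: nn_integral_cong)
  also have "\<dots> = ennreal rate_bound * (\<integral>\<^sup>+t. ennreal \<bar>t\<bar> \<partial>time_dist) + ennreal impulse_bound"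
    using prob_space.emeasure_space_1[OF prob_space_time_dist]
    by (subst nn_integral_add) (auto simp: nn_integral_cmult)
  finally show ?thesis
    using nn_integral_abs_time_finite by (simp add: ennreal_mult_less_top)
qed

lemma nn_integral_step_cost_bound_avoiding:
  "(\<integral>\<^sup>+\<omega>. (if avoids_goal_upto i c \<omega> then step_cost_bound (\<omega> i) else 0) \<partial>\<Omega>)
     = avoid_upto_prob i c * (\<integral>\<^sup>+x. step_cost_bound x \<partial>M)"
proof (induction i arbitrary: c)
  case 0
  have "(\<integral>\<^sup>+\<omega>. step_cost_bound (\<omega> 0) \<partial>\<Omega>) = (\<integral>\<^sup>+x. \<integral>\<^sup>+\<omega>. step_cost_bound x \<partial>\<Omega> \<partial>M)"
    by (subst nn_integral_run_space_split) simp_all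
  then show ?case
    using emeasure_run_space_space by (simp add: avoid_upto_prob_0 avoids_goal_upto_def)
next
  case (Suc i)
  have "(\<integral>\<^sup>+\<omega>. (if avoids_goal_upto (Suc i) c \<omega> then step_cost_bound (\<omega> (Suc i)) else 0) \<partial>\<Omega>)
      = (\<integral>\<^sup>+x. \<integral>\<^sup>+\<omega>. (if avoids_goal_upto (Suc i) c (case_nat x \<omega>)
           then step_cost_bound (case_nat x \<omega> (Suc i)) else 0) \<partial>\<Omega> \<partial>M)"
    by (subst nn_integral_run_space_split) simp_all
  also have "\<dots> = (\<integral>\<^sup>+x. (if fst (trans Sfd d c x) \<in> G then 0 else avoid_upto_prob i (trans Sfd d c x))
      * (\<integral>\<^sup>+x. step_cost_bound x \<partial>M) \<partial>M)"
    by (intro nn_integral_cong) (simp add: avoids_goal_upto_Suc Suc.IH[symmetric] cong: if_cong)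
  also have "\<dots> = avoid_upto_prob (Suc i) c * (\<integral>\<^sup>+x. step_cost_bound x \<partial>M)"
    unfolding avoid_upto_prob_Suc by (rule nn_integral_multc) measurable
  finally show ?case .
qed

lemma total_cost_le:
  assumes "\<not> avoids_goal (fresh_cfg s) \<omega>"
  shows "total_cost Sfd s G R IP IF d \<omega>
    \<le> (\<Sum>i. if avoids_goal_upto i (fresh_cfg s) \<omega> then step_cost_bound (\<omega> i) else 0)"
proof -
  have hit: "\<exists>n>0. fst (cfg Sfd d s \<omega> n) \<in> G"
    using assms by (auto simp: avoids_goal_def cfg_eq_run fresh_cfg_def)
  define T where "T = (LEAST n. n > 0 \<and> fst (cfg Sfd d s \<omega> n) \<in> G)"
  have avoiding: "avoids_goal_upto i (fresh_cfg s) \<omega>" if "i < T" for i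
    unfolding avoids_goal_upto_def
  proof
    fix n assume n: "n \<in> {1..i}"
    show "fst (run (fresh_cfg s) \<omega> n) \<notin> G"
    proof
      assume "fst (run (fresh_cfg s) \<omega> n) \<in> G"
      then have "T \<le> n"
        unfolding T_def using n by (intro Least_le) (auto simp: cfg_eq_run fresh_cfg_def)
      then show False using n that by simp
    qed
  qed
  have "total_cost Sfd s G R IP IF d \<omega> = (\<Sum>i<T. step_cost R IP IF (cfg Sfd d s \<omega> i) (\<omega> i))"
    using hit by (simp add: total_cost_def T_def)
  also have "\<dots> \<le> (\<Sum>i<T. if avoids_goal_upto i (fresh_cfg s) \<omega> then step_cost_bound (\<omega> i) else 0)"
    using avoiding step_cost_le_bound by (intro sum_mono) auto
  also have "\<dots> \<le> (\<Sum>i. if avoids_goal_upto i (fresh_cfg s) \<omega> then step_cost_bound (\<omega> i) else 0)"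
    by (intro sum_le_suminf) auto
  finally show ?thesis .
qed

lemma expected_cost_finite:
  assumes "\<not> dead_end_reachable P F Sfd G s"
  shows "expected_cost lam P Sfd F s G R IP IF d < top"
proof -
  let ?bound = "\<lambda>\<omega>. \<Sum>i. if avoids_goal_upto i (fresh_cfg s) \<omega> then step_cost_bound (\<omega> i) else 0"
  have "avoid_prob (fresh_cfg s) = 0"
    using avoid_prob_eq_0[OF assms avoiding_cfg_init[OF assms]] .
  then have "AE \<omega> in \<Omega>. \<not> avoids_goal (fresh_cfg s) \<omega>"
    unfolding avoid_prob_def by (subst (asm) nn_integral_0_iff_AE) (auto elim!: AE_mp)
  then have "expected_cost lam P Sfd F s G R IP IF d \<le> (\<integral>\<^sup>+\<omega>. ?bound \<omega> \<partial>\<Omega>)"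
    unfolding expected_cost_def by (intro nn_integral_mono_AE) (auto elim!: AE_mp intro: total_cost_le)
  also have "\<dots> = (\<Sum>i. avoid_upto_prob i (fresh_cfg s)) * (\<integral>\<^sup>+x. step_cost_bound x \<partial>M)"
    by (subst nn_integral_suminf) (measurable, simp add: nn_integral_step_cost_bound_avoiding)
  also have "\<dots> < top"
    using suminf_avoid_upto_prob_finite[OF assms avoiding_cfg_init[OF assms]]
      nn_integral_step_cost_bound_finite
    by (simp add: ennreal_mult_less_top)
  finally show ?thesis .
qed

end

lemma expected_cost_infinite:
  assumes "dead_end_reachable P F Sfd G s"
  shows "expected_cost lam P Sfd F s G R IP IF d = \<infinity>"
proof -
  have "avoid_prob (fresh_cfg s) > 0"
    using assms valid_cfg_init
    by (auto simp: dead_end_reachable_def fresh_cfg_def intro: avoid_prob_pos_if_dead_end_reachable)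
  moreover have "top * avoid_prob (fresh_cfg s) = (\<integral>\<^sup>+\<omega>. top * (if avoids_goal (fresh_cfg s) \<omega> then 1 else 0) \<partial>\<Omega>)"
    unfolding avoid_prob_def by (rule nn_integral_cmult[symmetric]) measurable
  moreover have "\<dots> \<le> expected_cost lam P Sfd F s G R IP IF d"
    unfolding expected_cost_def
    by (intro nn_integral_mono) (auto simp: total_cost_def avoids_goal_def cfg_eq_run fresh_cfg_def)
  ultimately show ?thesis by (simp add: top_unique)
qed

lemma expected_cost_eq_top_iff:
  "cost_structure R IP IF \<Longrightarrow>
    expected_cost lam P Sfd F s G R IP IF d = \<infinity> \<longleftrightarrow> dead_end_reachable P F Sfd G s"
  using expected_cost_finite expected_cost_infinite by fastforce

end

theorem lemma1:
  fixes lam :: real and P F :: "'s::finite \<Rightarrow> 's \<Rightarrow> real" and Sfd G :: "'s set" and s_in :: 's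
    and R :: "'s \<Rightarrow> real" and IP IF :: "'s \<Rightarrow> 's \<Rightarrow> real" and d d' :: "'s \<Rightarrow> real"
  assumes "fdCTMC lam P Sfd F"
    and "cost_structure R IP IF"
    and "\<forall>s\<in>Sfd. d s > 0"
    and "\<forall>s\<in>Sfd. d' s > 0"
  shows "expected_cost lam P Sfd F s_in G R IP IF d = \<infinity> \<longleftrightarrow>
         expected_cost lam P Sfd F s_in G R IP IF d' = \<infinity>"
proof -
  interpret C: fd_ctmc_delays lam P F Sfd G d
    using assms(1,3) by unfold_locales
  interpret C': fd_ctmc_delays lam P F Sfd G d'
    using assms(1,4) by unfold_locales
  show ?thesis
    using C.expected_cost_eq_top_iff C'.expected_cost_eq_top_iff assms(2) by simp
qed

end
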